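(* Let $N\ge2$ and suppose $U$ satisfies Assumption (U), $G$ satisfies Assumption (G1) (see context), and $\sum_{i=1}^NU(q_i)+\sum_{1\le i<j\le N}G(q_i-q_j)\ge1$ for all $\mathbf{q}\in\mathcal{D}$. Then there exist positive constants $c_G$ (small) and $C_G$ (large) independent of $\mathbf{q}$ such that for all $\mathbf{q}=(q_1,\dots,q_N)\in\mathcal{D}$, $$C_G\Big[\sum_{i=1}^NU(q_i)+\sum_{1\le i<j\le N}G(q_i-q_j)\Big]\ge\sum_{i=1}^N|q_i|-c_G\sum_{1\le i<j\le N}\log|q_i-q_j|\ge c_G\sum_{i=1}^N|q_i|+c_G\max\{-\log|q_i-q_j|:1\le i<j\le N\}.$$
   Context: $\mathcal{D}=\{\mathbf{q}\in(\mathbb{R}^d)^N:q_i\ne q_j\text{ for }i\ne j\}$. Assumption (U): $U\in C^\infty(\mathbb{R}^d;[1,\infty))$ and there are constants $a_1>0$, $\lambda\ge1$, $a_2,a_3>0$ such that for all $q$: $\frac{1}{a_1}|q|^{\lambda+1}-a_1\le |U(q)|\le a_1(1+|q|^{\lambda+1})$, $|\nabla U(q)|\le a_1(1+|q|^\lambda)$, $\langle\nabla U(q),q\rangle\ge a_2|q|^{\lambda+1}-a_3$. Assumption (G1): $G\in C^\infty(\mathbb{R}^d\setminus\{0\};\mathbb{R})$, $G(q)\to\infty$ as $|q|\to0$, $G$ even, $\nabla G$ odd; there is $\beta_1\ge1$ with $|G(q)|\le a_1(1+|q|+|q|^{-\beta_1})$, $|\nabla G(q)|\le a_1(1+|q|^{-\beta_1})$;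 and constants $\beta_2\in[0,\beta_1)$, $a_4>0$, $a_5\in\mathbb{R}$, $a_6>0$ with $\big|\nabla G(q)+a_4\frac{q}{|q|^{\beta_1+1}}+a_5\frac{q}{|q|^{\beta_2+1}}\big|\le a_6$ for $q\ne0$. *)

theory Defs
  imports "HOL-Analysis.Analysis"
begin

fun Ck_on :: "nat \<Rightarrow> 'a::euclidean_space set \<Rightarrow> ('a \<Rightarrow> real) \<Rightarrow> bool" where
  "Ck_on 0 S f = continuous_on S f"
| "Ck_on (Suc k) S f =
     ((\<forall>x\<in>S. f differentiable (at x)) \<and>
      (\<forall>v. Ck_on k S (\<lambda>x. frechet_derivative f (at x) v)))"

definition smooth_on :: "'a::euclidean_space set \<Rightarrow> ('a \<Rightarrow> real) \<Rightarrow> bool" where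
  "smooth_on S f \<longleftrightarrow> (\<forall>k. Ck_on k S f)"

definition grad :: "('a::euclidean_space \<Rightarrow> real) \<Rightarrow> 'a \<Rightarrow> 'a" where
  "grad f x = (\<Sum>b\<in>Basis. frechet_derivative f (at x) b *\<^sub>R b)"

end

theory Submission
  imports Defs
begin

(*
  Near the origin the asymptotics of grad G make the radial derivative of G at
  distance t at most -a4/(2t); integrating along rays gives the logarithmic
  lower bound G x >= -(a4/2) ln |x| - C - a1 |x|.  Since ln d <= d, the pair
  potential is then bounded below by -C - const (|q_i| + |q_j|), which the
  superlinear growth of U absorbs.  Hence both sum |q_i| and
  - sum ln |q_i - q_j| are bounded by an affine function of the energy, and
  the energy being at least 1 turns this into a linear bound.  The second
  inequality uses only ln d <= d <= |q_i| + |q_j|.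
*)

lemma differentiable_at_of_smooth_on:
  assumes "smooth_on S f" "x \<in> S"
  shows "f differentiable (at x)"
proof -
  have "Ck_on (Suc 0) S f" using assms(1) unfolding smooth_on_def by blast
  then show ?thesis using assms(2) by simp
qed

lemma inner_grad_eq_frechet_derivative:
  fixes f :: "'a::euclidean_space \<Rightarrow> real"
  assumes "f differentiable (at x)"
  shows "grad f x \<bullet> u = frechet_derivative f (at x) u"
proof -
  have lin: "linear (frechet_derivative f (at x))"
    using assms by (rule linear_frechet_derivative)
  have "frechet_derivative f (at x) u = frechet_derivative f (at x) (\<Sum>b\<in>Basis. (u \<bullet> b) *\<^sub>R b)"
    by (simp add: euclidean_representation)
  also have "\<dots> = (\<Sum>b\<in>Basis. (u \<bullet> b) * frechet_derivative f (at x) b)"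
    using lin by (simp add: linear_sum linear_scale)
  also have "\<dots> = grad f x \<bullet> u"
    unfolding grad_def by (simp add: inner_sum_right inner_commute mult.commute)
  finally show ?thesis by simp
qed

lemma has_real_derivative_along_ray:
  fixes G :: "'a::euclidean_space \<Rightarrow> real"
  assumes "G differentiable (at (t *\<^sub>R u))"
  shows "((\<lambda>s. G (s *\<^sub>R u)) has_real_derivative (grad G (t *\<^sub>R u) \<bullet> u)) (at t)"
proof -
  let ?G' = "frechet_derivative G (at (t *\<^sub>R u))"
  have "((\<lambda>s. s *\<^sub>R u) has_derivative (\<lambda>s. s *\<^sub>R u)) (at t)"
    by (rule bounded_linear_imp_has_derivative[OF bounded_linear_scaleR_left])
  moreover have "(G has_derivative ?G') (at (t *\<^sub>R u))"
    using assms frechet_derivative_works by blast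
  ultimately have "((\<lambda>s. G (s *\<^sub>R u)) has_derivative (\<lambda>s. ?G' (s *\<^sub>R u))) (at t)"
    using has_derivative_compose by blast
  moreover have "linear ?G'" using assms by (rule linear_frechet_derivative)
  then have "(\<lambda>s. ?G' (s *\<^sub>R u)) = (*) (?G' u)"
    by (auto simp: fun_eq_iff linear_scale mult.commute)
  ultimately show ?thesis
    unfolding has_field_derivative_def using inner_grad_eq_frechet_derivative[OF assms] by simp
qed

lemma ln_plus_along_ray_antimono:
  fixes G :: "'a::euclidean_space \<Rightarrow> real"
  assumes diff: "\<forall>x. x \<noteq> 0 \<longrightarrow> G differentiable (at x)"
    and radial: "\<forall>x. x \<noteq> 0 \<and> norm x \<le> \<delta> \<longrightarrow> grad G x \<bullet> x \<le> - k"
    and u: "norm u = 1" and st: "0 < s" "s \<le> t" "t \<le> \<delta>"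
  shows "G (t *\<^sub>R u) + k * ln t \<le> G (s *\<^sub>R u) + k * ln s"
proof (rule DERIV_nonpos_imp_nonincreasing[where f = "\<lambda>r. G (r *\<^sub>R u) + k * ln r", OF st(2)])
  fix r assume r: "s \<le> r" "r \<le> t"
  then have "r > 0" using st by linarith
  then have "r *\<^sub>R u \<noteq> 0" using u by auto
  then have "((\<lambda>r. G (r *\<^sub>R u) + k * ln r) has_real_derivative
      grad G (r *\<^sub>R u) \<bullet> u + k / r) (at r)"
    using \<open>r > 0\<close> diff
    by (auto intro!: derivative_eq_intros has_real_derivative_along_ray simp: field_simps)
  moreover have "grad G (r *\<^sub>R u) \<bullet> (r *\<^sub>R u) \<le> - k"
    using radial[rule_format, of "r *\<^sub>R u"] \<open>r *\<^sub>R u \<noteq> 0\<close> u r st \<open>r > 0\<close> by simp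
  then have "grad G (r *\<^sub>R u) \<bullet> u + k / r \<le> 0"
    using \<open>r > 0\<close> by (simp add: field_simps)
  ultimately show "\<exists>y. ((\<lambda>r. G (r *\<^sub>R u) + k * ln r) has_real_derivative y) (at r) \<and> y \<le> 0"
    by blast
qed

lemma inner_le_of_asymptotics:
  fixes F :: "'a::real_inner \<Rightarrow> 'a"
  assumes F_asym: "\<forall>x. x \<noteq> 0 \<longrightarrow>
        norm (F x + (a4 / norm x powr (beta1 + 1)) *\<^sub>R x
                  + (a5 / norm x powr (beta2 + 1)) *\<^sub>R x) \<le> a6"
    and x: "x \<noteq> 0"
  shows "F x \<bullet> x \<le> a6 * norm x - a4 * norm x powr (1 - beta1) - a5 * norm x powr (1 - beta2)"
proof -
  define t where "t = norm x"
  define V where "V = F x + (a4 / t powr (beta1 + 1)) *\<^sub>R x + (a5 / t powr (beta2 + 1)) *\<^sub>R x"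
  have t: "t > 0" using x by (simp add: t_def)
  have "norm V \<le> a6" using F_asym x by (simp add: V_def t_def)
  then have "V \<bullet> x \<le> a6 * t"
    using norm_cauchy_schwarz[of V x] mult_right_mono[of "norm V" a6 t] t unfolding t_def by linarith
  moreover have "t * t / t powr (b + 1) = t powr (1 - b)" for b
    using t by (simp add: powr_add powr_diff)
  then have "V \<bullet> x = F x \<bullet> x + a4 * t powr (1 - beta1) + a5 * t powr (1 - beta2)"
    by (simp add: V_def inner_add_left t_def dot_square_norm power2_eq_square
        flip: t_def times_divide_eq_right)
  ultimately show ?thesis unfolding t_def by linarith
qed

lemma asymptotic_bound_le_neg_half:
  fixes t :: real
  assumes t: "0 < t" "t \<le> 1" and beta1: "beta1 \<ge> 1" and a4: "a4 \<ge> 0"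
    and small: "a6 * t \<le> a4 / 4" "\<bar>a5\<bar> * t powr (beta1 - beta2) \<le> a4 / 4"
  shows "a6 * t - a4 * t powr (1 - beta1) - a5 * t powr (1 - beta2) \<le> - a4 / 2"
proof -
  define w where "w = t powr (1 - beta1)"
  have w: "1 \<le> w" using powr_mono'[of "1 - beta1" 0 t] t beta1 by (simp add: w_def)
  have "t powr (1 - beta2) = t powr (beta1 - beta2) * w"
    by (simp add: w_def flip: powr_add)
  moreover have "0 \<le> t powr (beta1 - beta2) * w" using w by simp
  ultimately have "- a5 * t powr (1 - beta2) \<le> \<bar>a5\<bar> * t powr (beta1 - beta2) * w"
    using mult_right_mono[OF abs_ge_minus_self[of a5]] by (simp add: mult.assoc)
  also have "\<dots> \<le> a4 / 4 * w" using small(2) w by (intro mult_right_mono) auto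
  finally have "- a5 * t powr (1 - beta2) \<le> a4 / 4 * w" .
  moreover have "a4 \<le> a4 * w" using w a4 by (simp add: mult_le_cancel_left1)
  ultimately show ?thesis using small(1) unfolding w_def by linarith
qed

lemma inner_le_neg_half_near_zero:
  fixes F :: "'a::real_inner \<Rightarrow> 'a"
  assumes beta1: "beta1 \<ge> 1" and beta2: "beta2 < beta1"
    and a4: "a4 > 0" and a6: "a6 > 0"
    and F_asym: "\<forall>x. x \<noteq> 0 \<longrightarrow>
        norm (F x + (a4 / norm x powr (beta1 + 1)) *\<^sub>R x
                  + (a5 / norm x powr (beta2 + 1)) *\<^sub>R x) \<le> a6"
  shows "\<exists>\<delta>>0. \<forall>x. x \<noteq> 0 \<and> norm x \<le> \<delta> \<longrightarrow> F x \<bullet> x \<le> - a4 / 2"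
proof -
  define e where "e = beta1 - beta2"
  define r where "r = a4 / (4 * (\<bar>a5\<bar> + 1))"
  define \<delta> where "\<delta> = min (min 1 (a4 / (4 * a6))) (r powr (1 / e))"
  have e: "e > 0" using beta2 by (simp add: e_def)
  have r: "r > 0" using a4 by (simp add: r_def add_pos_nonneg)
  have "F x \<bullet> x \<le> - a4 / 2" if x: "x \<noteq> 0" "norm x \<le> \<delta>" for x
  proof -
    define t where "t = norm x"
    have t: "0 < t" "t \<le> 1" using x by (auto simp: t_def \<delta>_def)
    have "t \<le> a4 / (4 * a6)" using x by (simp add: t_def \<delta>_def)
    then have "a6 * t \<le> a4 / 4" using a6 by (simp add: field_simps)
    moreover have "\<bar>a5\<bar> * t powr e \<le> a4 / 4"
    proof -
      have "t powr e \<le> (r powr (1 / e)) powr e"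
        using x t e by (intro powr_mono2) (auto simp: t_def \<delta>_def)
      also have "\<dots> = r" using e r by (simp add: powr_powr)
      finally have "\<bar>a5\<bar> * t powr e \<le> \<bar>a5\<bar> * r" by (intro mult_left_mono) auto
      also have "\<dots> \<le> a4 / 4" using a4 by (simp add: r_def field_simps)
      finally show ?thesis .
    qed
    ultimately have "a6 * t - a4 * t powr (1 - beta1) - a5 * t powr (1 - beta2) \<le> - a4 / 2"
      using asymptotic_bound_le_neg_half[OF t beta1 less_imp_le[OF a4]] unfolding e_def by blast
    then show ?thesis using inner_le_of_asymptotics[OF F_asym x(1)] unfolding t_def by linarith
  qed
  moreover have "\<delta> > 0" using a4 a6 r by (simp add: \<delta>_def)
  ultimately show ?thesis by blast
qed

lemma log_lower_bound_of_radial_bound: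
  fixes G :: "'a::euclidean_space \<Rightarrow> real"
  assumes diff: "\<forall>x. x \<noteq> 0 \<longrightarrow> G differentiable (at x)"
    and \<delta>: "\<delta> > 0" and k: "k \<ge> 0" and a: "a \<ge> 0"
    and radial: "\<forall>x. x \<noteq> 0 \<and> norm x \<le> \<delta> \<longrightarrow> grad G x \<bullet> x \<le> - k"
    and far: "\<forall>x. \<delta> \<le> norm x \<longrightarrow> - B - a * norm x \<le> G x"
  shows "\<exists>C. \<forall>x. x \<noteq> 0 \<longrightarrow> - k * ln (norm x) \<le> G x + C + a * norm x"
proof -
  define C where "C = B + a * \<delta> - k * ln \<delta>"
  have "- k * ln (norm x) \<le> G x + C + a * norm x" if "x \<noteq> 0" for x
  proof (cases "norm x \<le> \<delta>")
    case True
    define u where "u = x /\<^sub>R norm x"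
    have u: "norm u = 1" and x: "x = norm x *\<^sub>R u" using \<open>x \<noteq> 0\<close> by (simp_all add: u_def)
    have "G (\<delta> *\<^sub>R u) + k * ln \<delta> \<le> G x + k * ln (norm x)"
      using ln_plus_along_ray_antimono[OF diff radial u _ True] \<open>x \<noteq> 0\<close> x by simp
    moreover have "- B - a * \<delta> \<le> G (\<delta> *\<^sub>R u)" using far[rule_format, of "\<delta> *\<^sub>R u"] u \<delta> by simp
    moreover have "0 \<le> a * norm x" using a by simp
    ultimately show ?thesis unfolding C_def by linarith
  next
    case False
    then have "k * ln \<delta> \<le> k * ln (norm x)" using \<delta> k by (intro mult_left_mono ln_mono) simp_all
    moreover have "0 \<le> a * \<delta>" using a \<delta> by simp
    moreover have "- B - a * norm x \<le> G x" using far False by simp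
    ultimately show ?thesis unfolding C_def by linarith
  qed
  then show ?thesis by blast
qed

lemma log_lower_bound_of_G1:
  fixes G :: "'a::euclidean_space \<Rightarrow> real"
  assumes G_smooth: "smooth_on (UNIV - {0}) G"
    and a1: "a1 > 0" and beta1: "beta1 \<ge> 1" and beta2: "beta2 < beta1"
    and a4: "a4 > 0" and a6: "a6 > 0"
    and G_bound: "\<forall>q. q \<noteq> 0 \<longrightarrow> \<bar>G q\<bar> \<le> a1 * (1 + norm q + norm q powr (- beta1))"
    and G_asym: "\<forall>q. q \<noteq> 0 \<longrightarrow>
        norm (grad G q + (a4 / norm q powr (beta1 + 1)) *\<^sub>R q
                       + (a5 / norm q powr (beta2 + 1)) *\<^sub>R q) \<le> a6"
  shows "\<exists>C. \<forall>x. x \<noteq> 0 \<longrightarrow> - (a4 / 2) * ln (norm x) \<le> G x + C + a1 * norm x"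
proof -
  obtain \<delta> where \<delta>: "\<delta> > 0" and radial: "\<forall>x. x \<noteq> 0 \<and> norm x \<le> \<delta> \<longrightarrow> grad G x \<bullet> x \<le> - (a4 / 2)"
    using inner_le_neg_half_near_zero[OF beta1 beta2 a4 a6 G_asym] by auto
  have diff: "\<forall>x. x \<noteq> 0 \<longrightarrow> G differentiable (at x)"
    using differentiable_at_of_smooth_on[OF G_smooth] by blast
  have far: "\<forall>x. \<delta> \<le> norm x \<longrightarrow> - (a1 * (1 + \<delta> powr (- beta1))) - a1 * norm x \<le> G x"
  proof (intro allI impI)
    fix x :: 'a assume x: "\<delta> \<le> norm x"
    then have "x \<noteq> 0" using \<delta> by auto
    have "norm x powr (- beta1) \<le> \<delta> powr (- beta1)"
      using x \<delta> beta1 by (intro powr_mono2') auto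
    then have "a1 * (1 + norm x + norm x powr (- beta1)) \<le> a1 * (1 + norm x + \<delta> powr (- beta1))"
      using a1 by simp
    then have "\<bar>G x\<bar> \<le> a1 * (1 + norm x + \<delta> powr (- beta1))"
      using G_bound \<open>x \<noteq> 0\<close> by fastforce
    then show "- (a1 * (1 + \<delta> powr (- beta1))) - a1 * norm x \<le> G x" by (simp add: algebra_simps)
  qed
  show ?thesis
    by (rule log_lower_bound_of_radial_bound[OF diff \<delta> _ _ radial far]) (use a1 a4 in auto)
qed

lemma superlinear_of_powr_lower_bound:
  fixes U :: "'a::real_normed_vector \<Rightarrow> real"
  assumes a: "a > 0" and p: "p \<ge> 2" and U: "\<forall>x. norm x powr p / a - a \<le> U x"
  shows "\<forall>b. \<exists>C. \<forall>x. b * norm x \<le> U x + C"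
proof
  fix b :: real
  have "b * norm x \<le> U x + (a + 1 / a + a * b\<^sup>2 / 4)" for x
  proof -
    define n where "n = norm x"
    have "n\<^sup>2 - 1 \<le> n powr p"
    proof (cases "n \<ge> 1")
      case True
      then have "n powr 2 \<le> n powr p" using p by (intro powr_mono) auto
      then show ?thesis using True by (simp add: powr_numeral)
    next
      case False
      then have "n\<^sup>2 \<le> 1" by (simp add: n_def power_le_one)
      then show ?thesis using powr_ge_zero[of n p] by linarith
    qed
    then have "n\<^sup>2 / a \<le> (n powr p + 1) / a" using a by (intro divide_right_mono) auto
    moreover have "b * n \<le> n\<^sup>2 / a + a * b\<^sup>2 / 4"
    proof -
      have "0 \<le> (n - a * b / 2)\<^sup>2" by simp
      then have "a * (b * n) \<le> n\<^sup>2 + a\<^sup>2 * b\<^sup>2 / 4" by (simp add: power2_eq_square algebra_simps)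
      then show ?thesis using a by (simp add: field_simps power2_eq_square)
    qed
    moreover have "norm x powr p / a - a \<le> U x" using U by blast
    ultimately show ?thesis unfolding n_def by (simp add: add_divide_distrib)
  qed
  then show "\<exists>C. \<forall>x. b * norm x \<le> U x + C" by blast
qed

definition pair_sum :: "nat \<Rightarrow> (nat \<Rightarrow> nat \<Rightarrow> 'b::comm_monoid_add) \<Rightarrow> 'b" where
  "pair_sum N f = (\<Sum>i=1..N. \<Sum>j=i+1..N. f i j)"

lemma pair_sum_mono:
  fixes f g :: "nat \<Rightarrow> nat \<Rightarrow> 'b::ordered_comm_monoid_add"
  assumes "\<And>i j. 1 \<le> i \<Longrightarrow> i < j \<Longrightarrow> j \<le> N \<Longrightarrow> f i j \<le> g i j"
  shows "pair_sum N f \<le> pair_sum N g"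
  unfolding pair_sum_def using assms by (intro sum_mono) auto

lemma pair_sum_add: "pair_sum N (\<lambda>i j. f i j + g i j) = pair_sum N f + pair_sum N g"
  by (simp add: pair_sum_def sum.distrib)

lemma pair_sum_diff:
  fixes f g :: "nat \<Rightarrow> nat \<Rightarrow> 'b::ab_group_add"
  shows "pair_sum N (\<lambda>i j. f i j - g i j) = pair_sum N f - pair_sum N g"
  by (simp add: pair_sum_def sum_subtractf)

lemma pair_sum_cmult:
  fixes f :: "nat \<Rightarrow> nat \<Rightarrow> 'b::semiring_0"
  shows "pair_sum N (\<lambda>i j. c * f i j) = c * pair_sum N f"
  by (simp add: pair_sum_def sum_distrib_left)

lemma pair_sum_endpoints_le:
  fixes x :: "nat \<Rightarrow> real"
  assumes "\<And>i. 0 \<le> x i"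
  shows "pair_sum N (\<lambda>i j. x i + x j) \<le> 2 * real N * (\<Sum>i=1..N. x i)"
proof -
  have "pair_sum N (\<lambda>i j. x i + x j) \<le> (\<Sum>i=1..N. \<Sum>j=1..N. x i + x j)"
    unfolding pair_sum_def using assms by (intro sum_mono sum_mono2) auto
  also have "\<dots> = 2 * real N * (\<Sum>i=1..N. x i)"
    by (simp add: sum.distrib sum_distrib_left[symmetric] sum_distrib_right[symmetric] algebra_simps)
  finally show ?thesis .
qed

lemma Max_pairs_le_pair_sum:
  fixes h :: "nat \<Rightarrow> nat \<Rightarrow> real"
  assumes "N \<ge> 2"
  shows "Max {h i j | i j. 1 \<le> i \<and> i < j \<and> j \<le> N} \<le> pair_sum N (\<lambda>i j. max 0 (h i j))"
proof -
  let ?M = "{h i j | i j. 1 \<le> i \<and> i < j \<and> j \<le> N}"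
  have "?M \<subseteq> (\<lambda>(i, j). h i j) ` ({1..N} \<times> {1..N})"
    by (auto simp: image_iff)
  then have "finite ?M" by (rule finite_subset) simp
  moreover have "h 1 2 \<in> ?M" using assms by force
  ultimately obtain i0 j0 where "Max ?M = h i0 j0" and ij: "1 \<le> i0" "i0 < j0" "j0 \<le> N"
    using Max_in[of ?M] by blast
  moreover have "max 0 (h i0 j0) \<le> (\<Sum>j=i0+1..N. max 0 (h i0 j))"
    using ij by (intro member_le_sum) auto
  moreover have "(\<Sum>j=i0+1..N. max 0 (h i0 j)) \<le> pair_sum N (\<lambda>i j. max 0 (h i j))"
    unfolding pair_sum_def using ij
    by (intro member_le_sum[where f = "\<lambda>i. \<Sum>j=i+1..N. max 0 (h i j)"] sum_nonneg) auto
  ultimately show ?thesis by linarith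
qed

lemma sum_norm_minus_log_pair_sum_ge:
  fixes q :: "nat \<Rightarrow> 'a::real_normed_vector"
  assumes N: "N \<ge> 2" and q: "inj_on q {1..N}" and c: "0 < c" "(2 * real N + 1) * c \<le> 1"
  shows "c * (\<Sum>i=1..N. norm (q i)) + c * Max {- ln (norm (q i - q j)) | i j. 1 \<le> i \<and> i < j \<and> j \<le> N}
    \<le> (\<Sum>i=1..N. norm (q i)) - c * pair_sum N (\<lambda>i j. ln (norm (q i - q j)))"
proof -
  define S where "S = (\<Sum>i=1..N. norm (q i))"
  define L where "L = pair_sum N (\<lambda>i j. ln (norm (q i - q j)))"
  define M where "M = Max {- ln (norm (q i - q j)) | i j. 1 \<le> i \<and> i < j \<and> j \<le> N}"
  have "max 0 (- ln (norm (q i - q j))) \<le> (norm (q i) + norm (q j)) - ln (norm (q i - q j))"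
    if "1 \<le> i" "i < j" "j \<le> N" for i j
  proof -
    have "0 < norm (q i - q j)" using q that by (auto dest: inj_onD)
    then have "ln (norm (q i - q j)) \<le> norm (q i - q j) - 1" by (rule ln_le_minus_one)
    moreover have "norm (q i - q j) \<le> norm (q i) + norm (q j)" by (rule norm_triangle_ineq4)
    ultimately show ?thesis using norm_ge_zero[of "q i"] norm_ge_zero[of "q j"] by (simp add: max_def)
  qed
  then have "pair_sum N (\<lambda>i j. max 0 (- ln (norm (q i - q j))))
      \<le> pair_sum N (\<lambda>i j. (norm (q i) + norm (q j)) - ln (norm (q i - q j)))"
    by (rule pair_sum_mono)
  moreover have "M \<le> pair_sum N (\<lambda>i j. max 0 (- ln (norm (q i - q j))))"
    unfolding M_def by (rule Max_pairs_le_pair_sum[OF N])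
  moreover have "pair_sum N (\<lambda>i j. norm (q i) + norm (q j)) \<le> 2 * real N * S"
    unfolding S_def by (rule pair_sum_endpoints_le) simp
  ultimately have "M \<le> 2 * real N * S - L"
    unfolding L_def pair_sum_diff by linarith
  then have "c * M \<le> c * (2 * real N * S - L)"
    using c(1) by (rule mult_left_mono[OF _ less_imp_le])
  moreover have "(2 * real N + 1) * c * S \<le> 1 * S"
    using c(2) by (rule mult_right_mono) (simp add: S_def sum_nonneg)
  ultimately show ?thesis
    unfolding S_def[symmetric] L_def[symmetric] M_def[symmetric] by (simp add: algebra_simps)
qed

definition energy :: "('a \<Rightarrow> real) \<Rightarrow> ('a::ab_group_add \<Rightarrow> real) \<Rightarrow> nat \<Rightarrow> (nat \<Rightarrow> 'a) \<Rightarrow> real" where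
  "energy U G N q = (\<Sum>i=1..N. U (q i)) + pair_sum N (\<lambda>i j. G (q i - q j))"

lemma linear_lower_bound_of_log_lower_bound:
  fixes x :: "'a::real_normed_vector"
  assumes "k \<ge> 0" "x \<noteq> 0" "- k * ln (norm x) \<le> G x + C + a * norm x"
  shows "- C - (a + k) * norm x \<le> G x"
proof -
  have "ln (norm x) \<le> norm x" using ln_le_minus_one[of "norm x"] assms(2) by simp
  then have "k * ln (norm x) \<le> k * norm x" using assms(1) by (rule mult_left_mono)
  then show ?thesis using assms(3) by (simp add: algebra_simps)
qed

lemma sum_norm_le_energy_plus_const:
  fixes U G :: "'a::real_normed_vector \<Rightarrow> real"
  assumes k: "k \<ge> 0" and a: "a \<ge> 0"
    and G_log: "\<forall>x. x \<noteq> 0 \<longrightarrow> - k * ln (norm x) \<le> G x + C + a * norm x"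
    and U_superlinear: "\<forall>b. \<exists>C. \<forall>x. b * norm x \<le> U x + C"
  shows "\<exists>A. \<forall>q. inj_on q {1..N} \<longrightarrow> (\<Sum>i=1..N. norm (q i)) \<le> energy U G N q + A"
proof -
  define b where "b = 2 * real N * (a + k)"
  \<comment> \<open>U pays for the linear lower bound -b S of the pair terms with one S to spare.\<close>
  obtain CU where CU: "\<forall>x. (b + 1) * norm x \<le> U x + CU" using U_superlinear by blast
  have "(\<Sum>i=1..N. norm (q i)) \<le> energy U G N q + (real N * CU + pair_sum N (\<lambda>_ _. C))"
    if q: "inj_on q {1..N}" for q
  proof -
    define S where "S = (\<Sum>i=1..N. norm (q i))"
    have "- C - (a + k) * (norm (q i) + norm (q j)) \<le> G (q i - q j)"
      if "1 \<le> i" "i < j" "j \<le> N" for i j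
    proof -
      have nz: "q i - q j \<noteq> 0" using q that by (auto dest: inj_onD)
      have "- C - (a + k) * norm (q i - q j) \<le> G (q i - q j)"
        by (rule linear_lower_bound_of_log_lower_bound[where G = G, OF k nz G_log[rule_format, OF nz]])
      moreover have "(a + k) * norm (q i - q j) \<le> (a + k) * (norm (q i) + norm (q j))"
        using mult_left_mono[OF norm_triangle_ineq4, of "a + k"] a k by simp
      ultimately show ?thesis by linarith
    qed
    then have "pair_sum N (\<lambda>i j. - C - (a + k) * (norm (q i) + norm (q j)))
        \<le> pair_sum N (\<lambda>i j. G (q i - q j))"
      by (rule pair_sum_mono)
    moreover have "pair_sum N (\<lambda>i j. norm (q i) + norm (q j)) \<le> 2 * real N * S"
      unfolding S_def by (rule pair_sum_endpoints_le) simp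
    then have "(a + k) * pair_sum N (\<lambda>i j. norm (q i) + norm (q j)) \<le> (a + k) * (2 * real N * S)"
      using a k by (intro mult_left_mono) auto
    then have "(a + k) * pair_sum N (\<lambda>i j. norm (q i) + norm (q j)) \<le> b * S"
      by (simp add: b_def algebra_simps)
    moreover have "pair_sum N (\<lambda>_ _. - C) = - pair_sum N (\<lambda>_ _. C)"
      using pair_sum_cmult[of N "- 1" "\<lambda>_ _. C"] by simp
    moreover have "b * S + S \<le> (\<Sum>i=1..N. U (q i)) + real N * CU"
    proof -
      have "(\<Sum>i=1..N. (b + 1) * norm (q i)) \<le> (\<Sum>i=1..N. U (q i) + CU)"
        using CU by (intro sum_mono) blast
      then show ?thesis by (simp add: S_def sum.distrib sum_distrib_left distrib_right)
    qed
    ultimately show ?thesis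
      unfolding energy_def S_def pair_sum_diff pair_sum_cmult by linarith
  qed
  then show ?thesis by blast
qed

lemma neg_log_pair_sum_le_energy:
  fixes U G :: "'a::real_normed_vector \<Rightarrow> real"
  assumes a: "a \<ge> 0"
    and G_log: "\<forall>x. x \<noteq> 0 \<longrightarrow> - k * ln (norm x) \<le> G x + C + a * norm x"
    and U_nonneg: "\<forall>x. 0 \<le> U x" and q: "inj_on q {1..N}"
  shows "- k * pair_sum N (\<lambda>i j. ln (norm (q i - q j)))
    \<le> energy U G N q + pair_sum N (\<lambda>_ _. C) + 2 * real N * a * (\<Sum>i=1..N. norm (q i))"
proof -
  have "- k * ln (norm (q i - q j)) \<le> G (q i - q j) + C + a * (norm (q i) + norm (q j))"
    if "1 \<le> i" "i < j" "j \<le> N" for i j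
  proof -
    have "q i - q j \<noteq> 0" using q that by (auto dest: inj_onD)
    moreover have "a * norm (q i - q j) \<le> a * (norm (q i) + norm (q j))"
      using mult_left_mono[OF norm_triangle_ineq4 a] .
    ultimately show ?thesis using G_log[rule_format, of "q i - q j"] by linarith
  qed
  then have "pair_sum N (\<lambda>i j. - k * ln (norm (q i - q j)))
      \<le> pair_sum N (\<lambda>i j. G (q i - q j) + C + a * (norm (q i) + norm (q j)))"
    by (rule pair_sum_mono)
  then have "- k * pair_sum N (\<lambda>i j. ln (norm (q i - q j)))
      \<le> pair_sum N (\<lambda>i j. G (q i - q j)) + pair_sum N (\<lambda>_ _. C)
        + a * pair_sum N (\<lambda>i j. norm (q i) + norm (q j))"
    by (simp only: pair_sum_add pair_sum_cmult)
  moreover have "a * pair_sum N (\<lambda>i j. norm (q i) + norm (q j)) \<le> a * (2 * real N * (\<Sum>i=1..N. norm (q i)))"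
    using pair_sum_endpoints_le[of "\<lambda>i. norm (q i)" N] a by (intro mult_left_mono) auto
  moreover have "a * (2 * real N * (\<Sum>i=1..N. norm (q i))) = 2 * real N * a * (\<Sum>i=1..N. norm (q i))"
    by simp
  moreover have "0 \<le> (\<Sum>i=1..N. U (q i))" using U_nonneg by (simp add: sum_nonneg)
  ultimately show ?thesis unfolding energy_def by linarith
qed

lemma sum_norm_minus_log_pair_sum_le_energy:
  fixes U G :: "'a::real_normed_vector \<Rightarrow> real"
  assumes k: "k > 0" and a: "a \<ge> 0" and c: "c \<ge> 0"
    and G_log: "\<forall>x. x \<noteq> 0 \<longrightarrow> - k * ln (norm x) \<le> G x + C + a * norm x"
    and U_nonneg: "\<forall>x. 0 \<le> U x"
    and U_superlinear: "\<forall>b. \<exists>C. \<forall>x. b * norm x \<le> U x + C"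
    and energy_ge1: "\<forall>q. inj_on q {1..N} \<longrightarrow> 1 \<le> energy U G N q"
  shows "\<exists>K>0. \<forall>q. inj_on q {1..N} \<longrightarrow>
    (\<Sum>i=1..N. norm (q i)) - c * pair_sum N (\<lambda>i j. ln (norm (q i - q j))) \<le> K * energy U G N q"
proof -
  obtain A where A: "\<forall>q. inj_on q {1..N} \<longrightarrow> (\<Sum>i=1..N. norm (q i)) \<le> energy U G N q + A"
    using sum_norm_le_energy_plus_const[OF less_imp_le[OF k] a G_log U_superlinear] by blast
  define \<alpha> where "\<alpha> = 1 + c / k * (1 + 2 * real N * a)"
  define \<beta> where "\<beta> = A + c / k * (pair_sum N (\<lambda>_ _. C) + 2 * real N * a * A)"
  have "(\<Sum>i=1..N. norm (q i)) - c * pair_sum N (\<lambda>i j. ln (norm (q i - q j)))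
      \<le> (\<alpha> + \<bar>\<beta>\<bar>) * energy U G N q" if q: "inj_on q {1..N}" for q
  proof -
    define S where "S = (\<Sum>i=1..N. norm (q i))"
    define E where "E = energy U G N q"
    have S: "S \<le> E + A" using A q unfolding S_def E_def by blast
    have "- k * pair_sum N (\<lambda>i j. ln (norm (q i - q j))) \<le> E + pair_sum N (\<lambda>_ _. C) + 2 * real N * a * (E + A)"
      using neg_log_pair_sum_le_energy[OF a G_log U_nonneg q] S a
        mult_left_mono[OF S, of "2 * real N * a"]
      unfolding S_def E_def by simp
    then have "c / k * (- k * pair_sum N (\<lambda>i j. ln (norm (q i - q j))))
        \<le> c / k * (E + pair_sum N (\<lambda>_ _. C) + 2 * real N * a * (E + A))"
      using c k by (intro mult_left_mono) auto
    moreover have "c / k * (- k * pair_sum N (\<lambda>i j. ln (norm (q i - q j))))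
        = - c * pair_sum N (\<lambda>i j. ln (norm (q i - q j)))"
      using k by simp
    moreover have "E + A + c / k * (E + pair_sum N (\<lambda>_ _. C) + 2 * real N * a * (E + A)) = \<alpha> * E + \<beta>"
      unfolding \<alpha>_def \<beta>_def by (simp add: algebra_simps)
    ultimately have "S - c * pair_sum N (\<lambda>i j. ln (norm (q i - q j))) \<le> \<alpha> * E + \<beta>"
      using S by linarith
    moreover have "\<bar>\<beta>\<bar> * 1 \<le> \<bar>\<beta>\<bar> * E"
      using energy_ge1 q unfolding E_def by (intro mult_left_mono) auto
    ultimately show ?thesis unfolding S_def E_def by (simp add: distrib_right)
  qed
  moreover have "\<alpha> + \<bar>\<beta>\<bar> > 0" using k a c unfolding \<alpha>_def by (simp add: add_pos_nonneg)
  ultimately show ?thesis by blast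
qed

theorem lemmaA3:
  fixes U G :: "'a::euclidean_space \<Rightarrow> real"
    and N :: nat
    and a1 lam a2 a3 beta1 beta2 a4 a5 a6 :: real
  assumes N: "N \<ge> 2"
    (* Assumption (U) *)
    and U_smooth: "smooth_on UNIV U"
    and U_ge1: "\<forall>q. U q \<ge> 1"
    and a1: "a1 > 0" and lam: "lam \<ge> 1" and a2: "a2 > 0" and a3: "a3 > 0"
    and U_growth: "\<forall>q. norm q powr (lam + 1) / a1 - a1 \<le> \<bar>U q\<bar> \<and>
                        \<bar>U q\<bar> \<le> a1 * (1 + norm q powr (lam + 1))"
    and U_grad: "\<forall>q. norm (grad U q) \<le> a1 * (1 + norm q powr lam)"
    and U_coercive: "\<forall>q. grad U q \<bullet> q \<ge> a2 * norm q powr (lam + 1) - a3"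
    (* Assumption (G1) *)
    and G_smooth: "smooth_on (UNIV - {0}) G"
    and G_sing: "filterlim G at_top (at 0)"
    and G_even: "\<forall>q. G (- q) = G q"
    and G_grad_odd: "\<forall>q. q \<noteq> 0 \<longrightarrow> grad G (- q) = - grad G q"
    and beta1: "beta1 \<ge> 1"
    and G_bound: "\<forall>q. q \<noteq> 0 \<longrightarrow> \<bar>G q\<bar> \<le> a1 * (1 + norm q + norm q powr (- beta1))"
    and G_grad_bound: "\<forall>q. q \<noteq> 0 \<longrightarrow> norm (grad G q) \<le> a1 * (1 + norm q powr (- beta1))"
    and beta2: "0 \<le> beta2" "beta2 < beta1"
    and a4: "a4 > 0" and a6: "a6 > 0"
    and G_asym: "\<forall>q. q \<noteq> 0 \<longrightarrow>
        norm (grad G q + (a4 / norm q powr (beta1 + 1)) *\<^sub>R q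
                       + (a5 / norm q powr (beta2 + 1)) *\<^sub>R q) \<le> a6"
    (* lower bound of the potential on the configuration space D *)
    and E_ge1: "\<forall>q :: nat \<Rightarrow> 'a. (\<forall>i\<in>{1..N}. \<forall>j\<in>{1..N}. i \<noteq> j \<longrightarrow> q i \<noteq> q j) \<longrightarrow>
        (\<Sum>i=1..N. U (q i)) + (\<Sum>i=1..N. \<Sum>j=i+1..N. G (q i - q j)) \<ge> 1"
  shows "\<exists>cG CG. cG > 0 \<and> CG > 0 \<and>
    (\<forall>q :: nat \<Rightarrow> 'a. (\<forall>i\<in>{1..N}. \<forall>j\<in>{1..N}. i \<noteq> j \<longrightarrow> q i \<noteq> q j) \<longrightarrow>
       CG * ((\<Sum>i=1..N. U (q i)) + (\<Sum>i=1..N. \<Sum>j=i+1..N. G (q i - q j)))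
         \<ge> (\<Sum>i=1..N. norm (q i)) - cG * (\<Sum>i=1..N. \<Sum>j=i+1..N. ln (norm (q i - q j)))
     \<and> (\<Sum>i=1..N. norm (q i)) - cG * (\<Sum>i=1..N. \<Sum>j=i+1..N. ln (norm (q i - q j)))
         \<ge> cG * (\<Sum>i=1..N. norm (q i))
           + cG * Max {- ln (norm (q i - q j)) | i j. 1 \<le> i \<and> i < j \<and> j \<le> N})"
proof -
  have inj: "(\<forall>i\<in>{1..N}. \<forall>j\<in>{1..N}. i \<noteq> j \<longrightarrow> q i \<noteq> q j) \<longleftrightarrow> inj_on q {1..N}"
    for q :: "nat \<Rightarrow> 'a"
    by (auto simp: inj_on_def)
  obtain C where G_log: "\<forall>x. x \<noteq> 0 \<longrightarrow> - (a4 / 2) * ln (norm x) \<le> G x + C + a1 * norm x"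
    using log_lower_bound_of_G1[OF G_smooth a1 beta1 beta2(2) a4 a6 G_bound G_asym] by blast
  have U_nonneg: "\<forall>x. 0 \<le> U x" using U_ge1 zero_le_one order_trans by blast
  have U_lower: "\<forall>x. norm x powr (lam + 1) / a1 - a1 \<le> U x" using U_growth U_nonneg by force
  have U_superlinear: "\<forall>b. \<exists>C. \<forall>x. b * norm x \<le> U x + C"
    using lam by (intro superlinear_of_powr_lower_bound[OF a1 _ U_lower]) simp
  have energy_ge1: "\<forall>q. inj_on q {1..N} \<longrightarrow> 1 \<le> energy U G N q"
    using E_ge1 unfolding inj energy_def pair_sum_def .
  define cG where "cG = 1 / (2 * real N + 1)"
  have cG: "0 < cG" "(2 * real N + 1) * cG \<le> 1" by (simp_all add: cG_def)
  obtain CG where "CG > 0" and upper: "\<forall>q. inj_on q {1..N} \<longrightarrow>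
      (\<Sum>i=1..N. norm (q i)) - cG * pair_sum N (\<lambda>i j. ln (norm (q i - q j))) \<le> CG * energy U G N q"
    using sum_norm_minus_log_pair_sum_le_energy[OF _ a1[THEN less_imp_le] cG(1)[THEN less_imp_le]
        G_log U_nonneg U_superlinear energy_ge1] a4
    by auto
  show ?thesis
    using \<open>CG > 0\<close> cG(1) upper sum_norm_minus_log_pair_sum_ge[OF N _ cG]
    unfolding inj energy_def pair_sum_def by (intro exI[of _ cG] exI[of _ CG]) auto
qed

end
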